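(* Let $\mathcal{S}$ be a finite state space with non-terminal states $\mathcal{S}_N$, let $r:\mathcal{S}\to\mathbb{R}$ satisfy $r(s)<0$ for all $s\in\mathcal{S}_N$, let $\lambda>0$, and let $\mathbf{P}^{\pi_d}$ be the state-transition matrix of the default policy $\pi_d$, with rows of non-terminal states summing to $1$ and rows of terminal states equal to zero. Let $\mathbf{Z}=\big[\operatorname{diag}(\exp(-\mathbf{r}/\lambda))-\mathbf{P}^{\pi_d}\big]^{-1}$ and $\operatorname{Sym}(\mathbf{Z})=(\mathbf{Z}+\mathbf{Z}^\top)/2$. Assume there is exactly one start state $s_0$ and that every state is reachable from $s_0$ under the default policy, i.e. for every $s\in\mathcal{S}$ there is a finite sequence of states $s_0=u_0,u_1,\dots,u_k=s$ with $\prod_{t=0}^{k-1}\mathbf{P}^{\pi_d}(u_t,u_{t+1})>0$. Then the largest eigenvalue of $\operatorname{Sym}(\mathbf{Z})$ is positive and its corresponding (top) eigenvector can be chosen with all entries positive.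
   Context: $\mathbf{P}^{\pi_d}(s,s')$ is the probability of transitioning from $s$ to $s'$ under the default policy $\pi_d$, which assigns nonzero probability to all state-action pairs; $\exp$ acts entrywise. $\mathbf{Z}$ is the default representation (DR). *)

theory Defs
  imports "HOL-Analysis.Analysis"
begin

definition diag_mat :: "real ^ 'n \<Rightarrow> real ^ 'n ^ 'n" where
  "diag_mat d = (\<chi> i j. if i = j then d $ i else 0)"

definition default_rep :: "('n::finite \<Rightarrow> real) \<Rightarrow> real \<Rightarrow> real ^ 'n ^ 'n \<Rightarrow> real ^ 'n ^ 'n" where
  "default_rep r lam P = matrix_inv (diag_mat (\<chi> s. exp (- r s / lam)) - P)"

definition sym_part :: "real ^ 'n ^ 'n \<Rightarrow> real ^ 'n ^ 'n" where
  "sym_part A = (1/2) *\<^sub>R (A + transpose A)"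

definition is_eigenvalue :: "real ^ 'n ^ 'n \<Rightarrow> real \<Rightarrow> bool" where
  "is_eigenvalue A mu \<longleftrightarrow> (\<exists>v. v \<noteq> 0 \<and> A *v v = mu *\<^sub>R v)"

end

theory Submission
  imports Defs
begin

(* Write Z = M^-1 with M = diag d - P and d = exp (-r / lam). Since r < 0 on non-terminal states
   and terminal rows of P vanish, every row of M is strictly diagonally dominant, so a maximum
   principle shows that M is invertible with entrywise nonnegative inverse. The identity
   d a * Z a b = [a = b] + (SUM k. P a k * Z k b) propagates positivity of the column Z(-, s)
   backwards along any positive-probability path ending in s, so the row of Z at s0 is positive.
   Thus Sym Z is a nonnegative symmetric matrix with a positive column. For such a matrix the
   maximum mu of the Rayleigh quotient is the largest eigenvalue; replacing a maximiser x by |x|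
   does not lower the quotient, so some top eigenvector is nonnegative, and the positive column
   forces both mu > 0 and all entries of that eigenvector to be positive. *)

lemma finite_UNIV_obtains_argmax:
  fixes f :: "'a::finite \<Rightarrow> 'b::linorder"
  obtains i where "\<And>j. f j \<le> f i"
proof -
  have "Max (range f) \<in> range f" by (rule Max_in) auto
  then obtain i where "f i = Max (range f)" by (metis imageE)
  moreover have "f j \<le> Max (range f)" for j by simp
  ultimately show thesis using that by metis
qed

lemma quadratic_form_symmetric_swap:
  fixes S :: "real^'n^'n"
  assumes "transpose S = S"
  shows "w \<bullet> (S *v y) = y \<bullet> (S *v w)"
proof -
  have "y \<bullet> (S *v w) = (y v* S) \<bullet> w" by (simp add: dot_lmul_matrix)
  also have "y v* S = S *v y" by (metis assms transpose_matrix_vector)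
  finally show ?thesis by (simp add: inner_commute)
qed

lemma psd_quadratic_form_eq_0_imp_eq_0:
  fixes T :: "real^'n^'n"
  assumes sym: "transpose T = T"
    and psd: "\<And>y. 0 \<le> y \<bullet> (T *v y)"
    and zero: "w \<bullet> (T *v w) = 0"
  shows "T *v w = 0"
proof -
  define y where "y = T *v w"
  define g where "g = y \<bullet> y"
  define q where "q = y \<bullet> (T *v y)"
  have expand: "(w - t *\<^sub>R y) \<bullet> (T *v (w - t *\<^sub>R y)) = t\<^sup>2 * q - 2 * t * g" for t
    using quadratic_form_symmetric_swap[OF sym, of w y] zero
    by (simp add: y_def g_def q_def matrix_vector_mult_diff_distrib matrix_vector_mult_scaleR
        inner_diff_left inner_diff_right algebra_simps power2_eq_square)
  have "g \<le> 0"
  proof (rule ccontr)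
    assume "\<not> g \<le> 0"
    then have g_pos: "g > 0" by simp
    have q_nonneg: "q \<ge> 0" using psd by (simp add: q_def)
    (* by expand, the form at w - t y is t^2 q - 2 t g, which is negative for this small t > 0 *)
    define t where "t = g / (q + 1)"
    have t_pos: "t > 0" using g_pos q_nonneg by (simp add: t_def)
    have "0 \<le> t\<^sup>2 * q - 2 * t * g"
      using psd[of "w - t *\<^sub>R y"] by (simp only: expand)
    then have "0 \<le> t * (t * q - 2 * g)" by (simp add: power2_eq_square algebra_simps)
    then have "2 * g \<le> t * q" using t_pos by (simp add: zero_le_mult_iff)
    moreover have "t * q < g"
      using g_pos q_nonneg by (simp add: t_def field_simps)
    ultimately show False using g_pos by linarith
  qed
  then have "y = 0" using inner_ge_zero[of y] by (simp add: g_def)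
  then show ?thesis by (simp add: y_def)
qed

lemma rayleigh_bound_attained_imp_eigenvector:
  fixes S :: "real^'n^'n"
  assumes sym: "transpose S = S"
    and bound: "\<And>y. y \<bullet> (S *v y) \<le> mu * (y \<bullet> y)"
    and attained: "w \<bullet> (S *v w) = mu * (w \<bullet> w)"
  shows "S *v w = mu *\<^sub>R w"
proof -
  define T where "T = mat mu - S"
  have "mat mu *v y = mu *\<^sub>R y" for y :: "real^'n"
    by (metis matrix_scaleR matrix_vector_mul(2) bounded_linear_scaleR_right bounded_linear.linear)
  then have T_mult: "T *v y = mu *\<^sub>R y - S *v y" for y
    by (simp add: T_def matrix_vector_mult_diff_rdistrib)
  have "transpose T = T"
    using sym by (simp add: T_def transpose_def vec_eq_iff mat_def)
  moreover have "0 \<le> y \<bullet> (T *v y)" for y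
    using bound[of y] by (simp add: T_mult inner_diff_right)
  moreover have "w \<bullet> (T *v w) = 0"
    using attained by (simp add: T_mult inner_diff_right)
  ultimately have "T *v w = 0" by (rule psd_quadratic_form_eq_0_imp_eq_0)
  then show ?thesis by (simp add: T_mult)
qed

lemma rayleigh_quotient_attains_max:
  fixes S :: "real^'n^'n"
  obtains x where "x \<bullet> x = 1" and "\<And>y. y \<bullet> (S *v y) \<le> (x \<bullet> (S *v x)) * (y \<bullet> y)"
proof -
  define q where "q = (\<lambda>y::real^'n. y \<bullet> (S *v y))"
  have "continuous_on (sphere 0 1) q"
    unfolding q_def
    by (intro continuous_on_inner continuous_on_id linear_continuous_on
        matrix_vector_mul_bounded_linear)
  moreover have "sphere (0::real^'n) 1 \<noteq> {}" by simp
  ultimately obtain x where x_unit: "x \<in> sphere 0 1"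
    and x_max: "\<And>z. z \<in> sphere 0 1 \<Longrightarrow> q z \<le> q x"
    using continuous_attains_sup[OF compact_sphere] by blast
  have "q y \<le> q x * (y \<bullet> y)" for y
  proof (cases "y = 0")
    case False
    define z where "z = (1 / norm y) *\<^sub>R y"
    have "q z \<le> q x" using False by (intro x_max) (simp add: z_def)
    moreover have "q z = q y / (y \<bullet> y)"
      using False
      by (simp add: q_def z_def matrix_vector_mult_scaleR dot_square_norm power2_eq_square)
    ultimately show ?thesis using False by (simp add: divide_le_eq mult.commute)
  qed (simp add: q_def)
  moreover have "x \<bullet> x = 1" using x_unit by (simp add: dot_square_norm)
  ultimately show thesis using that by (simp add: q_def)
qed

lemma eigenvalue_le_rayleigh_bound:
  fixes S :: "real^'n^'n"
  assumes bound: "\<And>y. y \<bullet> (S *v y) \<le> mu * (y \<bullet> y)"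
    and "is_eigenvalue S mu'"
  shows "mu' \<le> mu"
proof -
  obtain v where "v \<noteq> 0" and "S *v v = mu' *\<^sub>R v"
    using assms(2) unfolding is_eigenvalue_def by blast
  then have "mu' * (v \<bullet> v) \<le> mu * (v \<bullet> v)" and "v \<bullet> v > 0"
    using bound[of v] by simp_all
  then show ?thesis by simp
qed

lemma quadratic_form_le_abs:
  fixes S :: "real^'n^'n"
  assumes nonneg: "\<forall>i j. 0 \<le> S$i$j"
  shows "x \<bullet> (S *v x) \<le> (\<chi> i. \<bar>x$i\<bar>) \<bullet> (S *v (\<chi> i. \<bar>x$i\<bar>))"
proof -
  have double_sum: "y \<bullet> (S *v y) = (\<Sum>i\<in>UNIV. \<Sum>j\<in>UNIV. y$i * S$i$j * y$j)"
    for y :: "real^'n"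
    by (simp add: inner_vec_def matrix_vector_mult_def sum_distrib_left mult.assoc)
  have "x$i * S$i$j * x$j \<le> \<bar>x$i\<bar> * S$i$j * \<bar>x$j\<bar>" for i j
  proof -
    have "x$i * S$i$j * x$j \<le> \<bar>x$i * S$i$j * x$j\<bar>" by (rule abs_ge_self)
    also have "\<dots> = \<bar>x$i\<bar> * S$i$j * \<bar>x$j\<bar>" using nonneg by (simp add: abs_mult)
    finally show ?thesis .
  qed
  then show ?thesis unfolding double_sum by (simp add: sum_mono)
qed

lemma nonneg_eigenvector_pos:
  fixes S :: "real^'n^'n"
  assumes sym: "transpose S = S"
    and nonneg: "\<forall>i j. 0 \<le> S$i$j"
    and pos_column: "\<forall>i. 0 < S$i$c"
    and w_nonneg: "\<forall>i. 0 \<le> w$i"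
    and "w \<noteq> 0"
    and eig: "S *v w = mu *\<^sub>R w"
    and "mu > 0"
  shows "0 < w$i"
proof -
  have through: "mu * w$a > 0" if "0 < S$a$b" "0 < w$b" for a b
  proof -
    have "S$a$b * w$b \<le> (\<Sum>k\<in>UNIV. S$a$k * w$k)"
      by (rule member_le_sum[where f="\<lambda>k. S$a$k * w$k"]) (use nonneg w_nonneg in auto)
    also have "\<dots> = mu * w$a" using eig by (simp add: vec_eq_iff matrix_vector_mult_def)
    finally show ?thesis using that by (meson mult_pos_pos less_le_trans)
  qed
  obtain j where "w$j \<noteq> 0" using \<open>w \<noteq> 0\<close> by (auto simp: vec_eq_iff)
  then have "0 < w$j" using w_nonneg by (simp add: order_le_neq_trans)
  moreover have "0 < S$c$j"
    using pos_column arg_cong[OF sym, of "\<lambda>A. A$j$c"] by (simp add: transpose_def)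
  ultimately have "0 < w$c" using through \<open>mu > 0\<close> by (simp add: zero_less_mult_iff)
  then show ?thesis using through[of i c] pos_column \<open>mu > 0\<close> by (simp add: zero_less_mult_iff)
qed

lemma perron_symmetric_nonneg:
  fixes S :: "real^'n^'n"
  assumes sym: "transpose S = S"
    and nonneg: "\<forall>i j. 0 \<le> S$i$j"
    and pos_column: "\<forall>i. 0 < S$i$c"
  shows "\<exists>mu v. is_eigenvalue S mu \<and> (\<forall>mu'. is_eigenvalue S mu' \<longrightarrow> mu' \<le> mu)
            \<and> mu > 0 \<and> S *v v = mu *\<^sub>R v \<and> (\<forall>i. v $ i > 0)"
proof -
  obtain x where x_unit: "x \<bullet> x = 1"
    and bound: "\<And>y. y \<bullet> (S *v y) \<le> (x \<bullet> (S *v x)) * (y \<bullet> y)"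
    using rayleigh_quotient_attains_max by blast
  define mu where "mu = x \<bullet> (S *v x)"
  (* |x| is again a maximiser of the Rayleigh quotient, hence an eigenvector *)
  define w where "w = (\<chi> i. \<bar>x$i\<bar>)"
  have w_unit: "w \<bullet> w = 1" using x_unit by (simp add: w_def inner_vec_def)
  have "mu \<le> w \<bullet> (S *v w)" unfolding mu_def w_def by (rule quadratic_form_le_abs[OF nonneg])
  moreover have "w \<bullet> (S *v w) \<le> mu" using bound[of w] w_unit by (simp add: mu_def)
  ultimately have "w \<bullet> (S *v w) = mu * (w \<bullet> w)" using w_unit by simp
  then have eig: "S *v w = mu *\<^sub>R w"
    using rayleigh_bound_attained_imp_eigenvector[OF sym] bound by (simp add: mu_def)
  have "w \<noteq> 0" using w_unit by auto
  have "S$c$c = axis c 1 \<bullet> (S *v axis c 1)"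
    by (simp add: matrix_vector_mult_basis inner_axis' column_def)
  also have "\<dots> \<le> mu" using bound[of "axis c 1"] by (simp add: mu_def)
  finally have "mu > 0" using pos_column by (meson less_le_trans)
  have "\<forall>i. 0 < w$i"
    using nonneg_eigenvector_pos[OF sym nonneg pos_column _ \<open>w \<noteq> 0\<close> eig \<open>mu > 0\<close>]
    by (simp add: w_def)
  moreover have "is_eigenvalue S mu"
    unfolding is_eigenvalue_def using \<open>w \<noteq> 0\<close> eig by blast
  moreover have "\<forall>mu'. is_eigenvalue S mu' \<longrightarrow> mu' \<le> mu"
    using eigenvalue_le_rayleigh_bound bound unfolding mu_def by blast
  ultimately show ?thesis using \<open>mu > 0\<close> eig by blast
qed

lemma diag_mat_minus_mult_vec_nth:
  "((diag_mat d - P) *v x)$i = d$i * x$i - (\<Sum>j\<in>UNIV. P$i$j * x$j)"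
  by (simp add: matrix_vector_mult_def diag_mat_def left_diff_distrib sum_subtractf
      if_distrib[of "\<lambda>a. a * _"] cong: if_cong)

lemma diag_mat_minus_mult_nth:
  "((diag_mat d - P) ** Z)$i$j = d$i * Z$i$j - (\<Sum>k\<in>UNIV. P$i$k * Z$k$j)"
  by (simp add: matrix_matrix_mult_def diag_mat_def left_diff_distrib sum_subtractf
      if_distrib[of "\<lambda>a. a * _"] cong: if_cong)

lemma diag_dominant_diag_pos:
  fixes P :: "real^'n^'n"
  assumes "\<forall>i j. 0 \<le> P$i$j" and "\<forall>i. (\<Sum>j\<in>UNIV. P$i$j) < d$i"
  shows "0 < d$i"
proof -
  have "0 \<le> (\<Sum>j\<in>UNIV. P$i$j)" using assms(1) by (simp add: sum_nonneg)
  then show ?thesis using assms(2) by (meson le_less_trans)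
qed

lemma diag_dominant_kernel_trivial:
  fixes P :: "real^'n^'n"
  assumes P_nonneg: "\<forall>i j. 0 \<le> P$i$j"
    and dominant: "\<forall>i. (\<Sum>j\<in>UNIV. P$i$j) < d$i"
    and "(diag_mat d - P) *v x = 0"
  shows "x = 0"
proof -
  obtain i where i_max: "\<And>j. \<bar>x$j\<bar> \<le> \<bar>x$i\<bar>"
    using finite_UNIV_obtains_argmax[of "\<lambda>j. \<bar>x$j\<bar>"] by blast
  have "0 < d$i" using diag_dominant_diag_pos[OF P_nonneg dominant] .
  moreover have "d$i * x$i = (\<Sum>j\<in>UNIV. P$i$j * x$j)"
    using arg_cong[OF assms(3), of "\<lambda>v. v$i"] by (simp add: diag_mat_minus_mult_vec_nth)
  ultimately have "d$i * \<bar>x$i\<bar> = \<bar>\<Sum>j\<in>UNIV. P$i$j * x$j\<bar>"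
    by (metis abs_mult abs_of_pos)
  also have "\<dots> \<le> (\<Sum>j\<in>UNIV. P$i$j * \<bar>x$i\<bar>)"
    by (rule order_trans[OF sum_abs sum_mono])
      (use P_nonneg i_max in \<open>auto simp: abs_mult intro: mult_left_mono\<close>)
  finally have "d$i * \<bar>x$i\<bar> \<le> (\<Sum>j\<in>UNIV. P$i$j) * \<bar>x$i\<bar>"
    by (simp add: sum_distrib_right)
  then have "(d$i - (\<Sum>j\<in>UNIV. P$i$j)) * \<bar>x$i\<bar> \<le> 0" by (simp add: algebra_simps)
  moreover have "0 < d$i - (\<Sum>j\<in>UNIV. P$i$j)" using dominant by simp
  ultimately have "\<bar>x$i\<bar> \<le> 0" by (simp add: mult_le_0_iff)
  then have "x$j = 0" for j using i_max[of j] by simp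
  then show ?thesis by (simp add: vec_eq_iff)
qed

lemma diag_dominant_solution_nonneg:
  fixes P :: "real^'n^'n"
  assumes P_nonneg: "\<forall>i j. 0 \<le> P$i$j"
    and dominant: "\<forall>i. (\<Sum>j\<in>UNIV. P$i$j) < d$i"
    and solution: "(diag_mat d - P) *v z = b"
    and b_nonneg: "\<forall>i. 0 \<le> b$i"
  shows "0 \<le> z$j"
proof -
  obtain i where i_min: "\<And>j. z$i \<le> z$j"
    using finite_UNIV_obtains_argmax[of "\<lambda>j. - z$j"] by auto
  have "(\<Sum>j\<in>UNIV. P$i$j) * z$i \<le> (\<Sum>j\<in>UNIV. P$i$j * z$j)"
    unfolding sum_distrib_right
    by (rule sum_mono) (use P_nonneg i_min in \<open>auto intro: mult_left_mono\<close>)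
  also have "\<dots> \<le> d$i * z$i"
    using arg_cong[OF solution, of "\<lambda>v. v$i"] b_nonneg[rule_format, of i]
    by (simp add: diag_mat_minus_mult_vec_nth)
  finally have "0 \<le> (d$i - (\<Sum>j\<in>UNIV. P$i$j)) * z$i" by (simp add: algebra_simps)
  moreover have "0 < d$i - (\<Sum>j\<in>UNIV. P$i$j)" using dominant by simp
  ultimately have "0 \<le> z$i" by (simp add: zero_le_mult_iff)
  then show ?thesis using i_min order_trans by blast
qed

lemma diag_dominant_mult_matrix_inv:
  fixes P :: "real^'n^'n"
  assumes "\<forall>i j. 0 \<le> P$i$j" and "\<forall>i. (\<Sum>j\<in>UNIV. P$i$j) < d$i"
  shows "(diag_mat d - P) ** matrix_inv (diag_mat d - P) = mat 1"
proof -
  have "invertible (diag_mat d - P)"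
    unfolding invertible_left_inverse matrix_left_invertible_ker
    using diag_dominant_kernel_trivial[OF assms] by blast
  then show ?thesis unfolding invertible_def matrix_inv_def by (rule someI2_ex) blast
qed

lemma diag_dominant_matrix_inv_nonneg:
  fixes P :: "real^'n^'n"
  assumes "\<forall>i j. 0 \<le> P$i$j" and "\<forall>i. (\<Sum>j\<in>UNIV. P$i$j) < d$i"
  shows "0 \<le> matrix_inv (diag_mat d - P) $ i $ j"
proof -
  let ?Z = "matrix_inv (diag_mat d - P)"
  have "(diag_mat d - P) *v (?Z *v axis j 1) = axis j 1"
    by (simp add: matrix_vector_mul_assoc diag_dominant_mult_matrix_inv[OF assms])
  then have "0 \<le> (?Z *v axis j 1) $ i"
    by (rule diag_dominant_solution_nonneg[OF assms]) (simp add: axis_def)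
  then show ?thesis by (simp add: matrix_vector_mult_basis column_def)
qed

lemma diag_dominant_matrix_inv_recurrence:
  fixes P :: "real^'n^'n"
  assumes "\<forall>i j. 0 \<le> P$i$j" and "\<forall>i. (\<Sum>j\<in>UNIV. P$i$j) < d$i"
  shows "d$a * matrix_inv (diag_mat d - P) $ a $ b
    = mat 1 $ a $ b + (\<Sum>k\<in>UNIV. P$a$k * matrix_inv (diag_mat d - P) $ k $ b)"
  using arg_cong[OF diag_dominant_mult_matrix_inv[OF assms], of "\<lambda>A. A$a$b"]
  by (simp add: diag_mat_minus_mult_nth)

lemma diag_dominant_matrix_inv_pos_path:
  fixes P :: "real^'n^'n"
  assumes P_nonneg: "\<forall>i j. 0 \<le> P$i$j"
    and dominant: "\<forall>i. (\<Sum>j\<in>UNIV. P$i$j) < d$i"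
    and path: "0 < (\<Prod>t<k. P $ u t $ u (Suc t))"
  shows "0 < matrix_inv (diag_mat d - P) $ u 0 $ u k"
proof -
  let ?Z = "matrix_inv (diag_mat d - P)"
  note d_pos = diag_dominant_diag_pos[OF P_nonneg dominant]
  note Z_nonneg = diag_dominant_matrix_inv_nonneg[OF P_nonneg dominant]
  note recurrence = diag_dominant_matrix_inv_recurrence[OF P_nonneg dominant]
  have lower_bound: "mat 1 $ a $ b + P$a$c * ?Z$c$b \<le> d$a * ?Z$a$b" for a b c
  proof -
    have "P$a$c * ?Z$c$b \<le> (\<Sum>k\<in>UNIV. P$a$k * ?Z$k$b)"
      by (rule member_le_sum[where f="\<lambda>k. P$a$k * ?Z$k$b"]) (use P_nonneg Z_nonneg in auto)
    then show ?thesis by (simp add: recurrence)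
  qed
  have edge: "0 < P $ u t $ u (Suc t)" if "t < k" for t
  proof -
    have "P $ u t $ u (Suc t) \<noteq> 0"
      using path that by (metis finite_lessThan lessThan_iff less_irrefl prod_zero_iff)
    then show ?thesis using P_nonneg by (simp add: order_le_neq_trans)
  qed
  (* positivity of the column ?Z(-, u k) propagates backwards along the path *)
  have "0 < ?Z $ u i $ u k" if "i \<le> k" for i
    using that
  proof (induction i rule: inc_induct)
    case base
    have "0 \<le> P $ u k $ u k * ?Z $ u k $ u k" using P_nonneg Z_nonneg by simp
    then have "0 < d $ u k * ?Z $ u k $ u k"
      using lower_bound[of "u k" "u k" "u k"] by (simp add: mat_def)
    then show ?case using d_pos[of "u k"] by (simp add: zero_less_mult_iff)
  next
    case (step i)
    have "0 < P $ u i $ u (Suc i) * ?Z $ u (Suc i) $ u k" using edge step by simp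
    moreover have "0 \<le> (mat 1 :: real^'n^'n) $ u i $ u k" by (simp add: mat_def)
    ultimately have "0 < d $ u i * ?Z $ u i $ u k"
      using lower_bound[of "u i" "u k" "u (Suc i)"] by linarith
    then show ?case using d_pos[of "u i"] by (simp add: zero_less_mult_iff)
  qed
  then show ?thesis by simp
qed

lemma sym_part_nth: "sym_part A $ i $ j = (A$i$j + A$j$i) / 2"
  by (simp add: sym_part_def transpose_def)

lemma transpose_sym_part: "transpose (sym_part A) = sym_part A"
  by (simp add: vec_eq_iff transpose_def sym_part_nth)

lemma row_sum_lt_exp_neg_reward:
  fixes P :: "real^'n^'n"
  assumes r_neg: "\<forall>s\<in>SN. r s < 0"
    and lam_pos: "lam > 0"
    and P_rows_nonterm: "\<forall>s\<in>SN. (\<Sum>s'\<in>UNIV. P $ s $ s') = 1"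
    and P_rows_term: "\<forall>s. s \<notin> SN \<longrightarrow> (\<forall>s'. P $ s $ s' = 0)"
  shows "(\<Sum>j\<in>UNIV. P$i$j) < exp (- r i / lam)"
proof (cases "i \<in> SN")
  case True
  then have "0 < - r i / lam" using r_neg lam_pos by (simp add: divide_neg_pos)
  then show ?thesis using P_rows_nonterm True by simp
qed (use P_rows_term in simp)

theorem propositionC2:
  fixes SN :: "'n::finite set"
    and r :: "'n \<Rightarrow> real"
    and lam :: real
    and P :: "real ^ 'n ^ 'n"
    and s0 :: 'n
  assumes r_neg: "\<forall>s\<in>SN. r s < 0"
    and lam_pos: "lam > 0"
    and P_nonneg: "\<forall>s s'. P $ s $ s' \<ge> 0"
    and P_rows_nonterm: "\<forall>s\<in>SN. (\<Sum>s'\<in>UNIV. P $ s $ s') = 1"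
    and P_rows_term: "\<forall>s. s \<notin> SN \<longrightarrow> (\<forall>s'. P $ s $ s' = 0)"
    and reach: "\<forall>s. \<exists>(u :: nat \<Rightarrow> 'n) k. u 0 = s0 \<and> u k = s \<and>
                       (\<Prod>t<k. P $ u t $ u (Suc t)) > 0"
  shows "\<exists>mu v. is_eigenvalue (sym_part (default_rep r lam P)) mu
            \<and> (\<forall>mu'. is_eigenvalue (sym_part (default_rep r lam P)) mu' \<longrightarrow> mu' \<le> mu)
            \<and> mu > 0
            \<and> sym_part (default_rep r lam P) *v v = mu *\<^sub>R v
            \<and> (\<forall>i. v $ i > 0)"
proof -
  define d :: "real^'n" where "d = (\<chi> s. exp (- r s / lam))"
  define Z where "Z = default_rep r lam P"
  have Z_eq: "Z = matrix_inv (diag_mat d - P)" by (simp add: Z_def d_def default_rep_def)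
  have dominant: "\<forall>i. (\<Sum>j\<in>UNIV. P$i$j) < d$i"
    using row_sum_lt_exp_neg_reward[OF r_neg lam_pos P_rows_nonterm P_rows_term]
    by (simp add: d_def)
  have Z_nonneg: "\<forall>i j. 0 \<le> Z$i$j"
    using diag_dominant_matrix_inv_nonneg[OF P_nonneg dominant] by (simp add: Z_eq)
  have Z_row_pos: "0 < Z$s0$s" for s
  proof -
    obtain u k where "u 0 = s0" "u k = s" "0 < (\<Prod>t<k. P $ u t $ u (Suc t))"
      using reach by blast
    then show ?thesis using diag_dominant_matrix_inv_pos_path[OF P_nonneg dominant] Z_eq by metis
  qed
  have "\<forall>i j. 0 \<le> sym_part Z $ i $ j" using Z_nonneg by (simp add: sym_part_nth)
  moreover have "\<forall>i. 0 < sym_part Z $ i $ s0"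
    using Z_nonneg Z_row_pos by (simp add: sym_part_nth add_nonneg_pos)
  ultimately show ?thesis
    using perron_symmetric_nonneg[OF transpose_sym_part] by (simp add: Z_def)
qed

end
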